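(* Suppose $h$ is odd. Then for every $p\in\mathcal P$, if $\mu(p)=\mu_0$ and $D_{\mu(p)}(p)=D_{\mu(p^r)}(p^r)$, then $\mu(p^r)>\mu_0$.
   Context: Let $n,h\ge2$, $N=\{1,\dots,n\}$, $H=\{1,\dots,h\}$, $\mathcal P$ the set of $h$-tuples of linear orders on $N$, $p^r$ the profile obtained by reversing each order; $x>_{p_i}y$ means $x\neq y$ and $p_i$ ranks $x$ above $y$; for an integer $\mu\in(h/2,h]$, $D_\mu(p)=\{x\in N: \forall y,\ |\{i: y>_{p_i}x\}|<\mu\}$; $\mu(p)=\min\{\mu\in\mathbb N\cap(h/2,h]: D_\mu(p)\ne\varnothing\}$; $\mu_0=\lceil(h+1)/2\rceil$. *)

theory Defs
  imports Complex_Main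
begin

(* A linear order on N = {1..n} is a relation r with (x,y) \<in> r meaning
   "x is ranked at least as high as y". *)
definition is_lin_order :: "nat \<Rightarrow> (nat \<times> nat) set \<Rightarrow> bool" where
  "is_lin_order n r \<longleftrightarrow> linear_order_on {1..n} r \<and> r \<subseteq> {1..n} \<times> {1..n}"

definition is_profile :: "nat \<Rightarrow> nat \<Rightarrow> (nat \<Rightarrow> (nat \<times> nat) set) \<Rightarrow> bool" where
  "is_profile n h p \<longleftrightarrow> (\<forall>i\<in>{1..h}. is_lin_order n (p i))"

definition rev_profile :: "(nat \<Rightarrow> (nat \<times> nat) set) \<Rightarrow> nat \<Rightarrow> (nat \<times> nat) set" where
  "rev_profile p = (\<lambda>i. (p i)\<inverse>)"

definition pref :: "(nat \<times> nat) set \<Rightarrow> nat \<Rightarrow> nat \<Rightarrow> bool" where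
  "pref r x y \<longleftrightarrow> x \<noteq> y \<and> (x, y) \<in> r"

definition D :: "nat \<Rightarrow> nat \<Rightarrow> nat \<Rightarrow> (nat \<Rightarrow> (nat \<times> nat) set) \<Rightarrow> nat set" where
  "D n h \<mu> p = {x \<in> {1..n}. \<forall>y\<in>{1..n}. card {i \<in> {1..h}. pref (p i) y x} < \<mu>}"

definition mu :: "nat \<Rightarrow> nat \<Rightarrow> (nat \<Rightarrow> (nat \<times> nat) set) \<Rightarrow> nat" where
  "mu n h p = (LEAST \<mu>::nat. real h / 2 < real \<mu> \<and> \<mu> \<le> h \<and> D n h \<mu> p \<noteq> {})"

definition mu0 :: "nat \<Rightarrow> nat" where
  "mu0 h = nat \<lceil>(real h + 1) / 2\<rceil>"

end

theory Submission
  imports Defs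
begin

text \<open>D(p) is nonempty at level \<mu>(p), since the top candidate of any voter lies in D_h(p).
  A candidate x lying in both D(p) and D(p^r) gives, for every other candidate y,
  two bounds: fewer than \<mu>(p) voters put y above x and fewer than \<mu>(p^r) voters put x
  above y. These two voter sets partition H, so h \<le> (\<mu>(p) - 1) + (\<mu>(p^r) - 1). For odd h
  and \<mu>(p) = (h+1)/2 this forces \<mu>(p^r) > (h+1)/2.\<close>

lemma pref_rev_profile: "pref (rev_profile p i) y x \<longleftrightarrow> pref (p i) x y"
  unfolding rev_profile_def pref_def by auto

lemma is_lin_order_has_top:
  assumes "is_lin_order n r" "n \<ge> 1"
  shows "\<exists>z\<in>{1..n}. \<forall>y\<in>{1..n}. \<not> pref r y z"
proof -
  have sub: "r \<subseteq> {1..n} \<times> {1..n}" and lin: "linear_order_on {1..n} r"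
    using assms(1) unfolding is_lin_order_def by auto
  have "finite r" using sub finite_subset by blast
  then have wf: "wf (r - Id)"
    using finite_acyclic_wf[OF _ linear_order_on_acyclic[OF lin]] by auto
  have "(1::nat) \<in> {1..n}" using assms(2) by auto
  then obtain z where "z \<in> {1..n}" "\<forall>y. (y, z) \<in> r - Id \<longrightarrow> y \<notin> {1..n}"
    using wf unfolding wf_eq_minimal by metis
  then show ?thesis unfolding pref_def by blast
qed

lemma D_h_nonempty:
  assumes "is_profile n h p" "h \<ge> 1" "n \<ge> 1"
  shows "D n h h p \<noteq> {}"
proof -
  have "is_lin_order n (p 1)" using assms(1,2) unfolding is_profile_def by auto
  then obtain z where z: "z \<in> {1..n}" "\<forall>y\<in>{1..n}. \<not> pref (p 1) y z"
    using is_lin_order_has_top assms(3) by blast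
  have "card {i \<in> {1..h}. pref (p i) y z} < h" if "y \<in> {1..n}" for y
  proof -
    have "{i \<in> {1..h}. pref (p i) y z} \<subseteq> {2..h}"
    proof
      fix i assume i: "i \<in> {i \<in> {1..h}. pref (p i) y z}"
      then have "i \<noteq> 1" using z(2) that by auto
      with i show "i \<in> {2..h}" by auto
    qed
    then have "card {i \<in> {1..h}. pref (p i) y z} \<le> card {2..h}" by (intro card_mono) auto
    then show ?thesis using assms(2) by simp
  qed
  then show ?thesis using z(1) unfolding D_def by auto
qed

lemma D_mu_nonempty:
  assumes "is_profile n h p" "h \<ge> 1" "n \<ge> 1"
  shows "D n h (mu n h p) p \<noteq> {}"
proof -
  have "real h / 2 < real h \<and> h \<le> h \<and> D n h h p \<noteq> {}"
    using D_h_nonempty[OF assms] assms(2) by auto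
  then show ?thesis unfolding mu_def by (rule LeastI2_ex[OF exI]) auto
qed

lemma card_pref_add_card_pref:
  assumes "is_profile n h p" "x \<in> {1..n}" "y \<in> {1..n}" "x \<noteq> y"
  shows "card {i \<in> {1..h}. pref (p i) y x} + card {i \<in> {1..h}. pref (p i) x y} = h"
proof -
  let ?A = "{i \<in> {1..h}. pref (p i) y x}" and ?B = "{i \<in> {1..h}. pref (p i) x y}"
  have lin: "linear_order_on {1..n} (p i)" if "i \<in> {1..h}" for i
    using assms(1) that unfolding is_profile_def is_lin_order_def by auto
  have "?A \<union> ?B = {1..h}"
    using lin assms(2-4) unfolding linear_order_on_def total_on_def pref_def by blast
  moreover have "?A \<inter> ?B = {}"
    using lin unfolding linear_order_on_def partial_order_on_def antisym_def pref_def by blast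
  ultimately show ?thesis using card_Un_disjoint[of ?A ?B] by simp
qed

lemma D_inter_D_rev_profile_bound:
  assumes "is_profile n h p" "n \<ge> 2"
    and "x \<in> D n h \<mu> p" "x \<in> D n h \<nu> (rev_profile p)"
  shows "h + 2 \<le> \<mu> + \<nu>"
proof -
  have x: "x \<in> {1..n}" using assms(3) unfolding D_def by auto
  obtain y where y: "y \<in> {1..n}" "y \<noteq> x"
  proof (cases "x = 1")
    case True then show ?thesis using that[of 2] assms(2) by auto
  next
    case False then show ?thesis using that[of 1] assms(2) by auto
  qed
  have "card {i \<in> {1..h}. pref (p i) y x} < \<mu>"
    using assms(3) y(1) unfolding D_def by auto
  moreover have "card {i \<in> {1..h}. pref (p i) x y} < \<nu>"
    using assms(4) y(1) unfolding D_def pref_rev_profile by auto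
  ultimately show ?thesis using card_pref_add_card_pref[OF assms(1) x y(1) y(2)[symmetric]] by linarith
qed

lemma mu0_odd:
  assumes "odd h"
  shows "2 * mu0 h = h + 1"
proof -
  obtain k where h: "h = 2 * k + 1" using assms oddE by blast
  then have "(real h + 1) / 2 = real (k + 1)" by simp
  then have "mu0 h = k + 1" unfolding mu0_def by (metis ceiling_of_nat nat_int)
  then show ?thesis using h by simp
qed

theorem lemma7:
  fixes n h :: nat and p :: "nat \<Rightarrow> (nat \<times> nat) set"
  assumes "n \<ge> 2" and "h \<ge> 2" and "odd h"
    and "is_profile n h p"
    and "mu n h p = mu0 h"
    and "D n h (mu n h p) p = D n h (mu n h (rev_profile p)) (rev_profile p)"
  shows "mu n h (rev_profile p) > mu0 h"
proof -
  obtain x where "x \<in> D n h (mu n h p) p"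
    using D_mu_nonempty[OF assms(4)] assms(1,2) by fastforce
  with assms(6) have "h + 2 \<le> mu n h p + mu n h (rev_profile p)"
    using D_inter_D_rev_profile_bound[OF assms(4,1)] by simp
  then show ?thesis using mu0_odd[OF assms(3)] assms(5) by linarith
qed

end
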